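(* Let $A=(Q,q_0,\Sigma,\delta,\alpha)$ with $Q_d$ be an LDBA and $\mathsf{Ord}$ an ordering of its states w.r.t. $Q_d$, and let $B$ be the deterministic parity automaton constructed from $A$ and $\mathsf{Ord}$ as described in the context. Then $\mathsf L(A)=\mathsf L(B)$.
   Context: A (transition-based) nondeterministic Büchi automaton is $A=(Q,q_0,\Sigma,\delta,\alpha)$ with finite $Q$, $q_0\in Q$, finite alphabet $\Sigma$, total $\delta\subseteq Q\times\Sigma\times Q$, accepting transitions $\alpha\subseteq\delta$; a run is accepting if it uses transitions of $\alpha$ infinitely often, and $\mathsf L(A)$ is the set of words with an accepting run. An LDBA additionally has $Q_d\subseteq Q$ with (1) $\alpha\subseteq Q_d\times\Sigma\times Q_d$; (2) each $q\in Q_d$ has exactly one $\sigma$-successor $\delta(q,\sigma)$ for each $\sigma$; (3) successors of states in $Q_d$ lie in $Q_d$. Assume $q_0\notin Q_d$ and write $\overline{Q_d}=Q\setminus Q_d$. For $S\subseteq Q$, $\mathsf{post}^\sigma_\delta(S)=\{q'\mid\exists q\in S:(q,\sigma,q')\in\delta\}$. An ordering w.r.t. $Q_d$ is $\mathsf{Ord}:Q\to\{1,\dots,|Q_d|,+\infty\}$ with value $+\infty$ exactly on $\overline{Q_d}$ and injective on $Q_d$. A deterministic parity automaton (DPA) $(Q',q_0',\Sigma,\delta',p)$ has a deterministic total transition function and a coloring $p$ assigning an integer to each transition; a word is accepted iff on its (unique) run the minimal color occurring infinitely often is even. For a finite set $S$, $\mathcal{OP}(S)$ is the set of pairs $(t,<)$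 with $t\subseteq S$ and $<$ a strict total order on $t$; $\mathsf{Ind}_{(t,<)}(e)$ is the position of $e\in t$ in $<$ (minimum has index 1). The DPA $B=(Q^B,q^B_0,\Sigma,\delta^B,p)$: $Q^B=\mathcal P(\overline{Q_d})\times\mathcal{OP}(Q_d)$, $q^B_0=(\{q_0\},(\emptyset,\emptyset))$. For a state $(s_1,(t_1,<_1))$ and $\sigma\in\Sigma$, $\delta^B((s_1,(t_1,<_1)),\sigma)=(s_2,(t_2,<_2))$ where $s_2=\mathsf{post}^\sigma_\delta(s_1)\cap\overline{Q_d}$, $t_2=\mathsf{post}^\sigma_\delta(s_1\cup t_1)\cap Q_d$, and for $q_1,q_2\in t_2$, $q_1<_2q_2$ iff one of: (a) neither $q_1$ nor $q_2$ equals $\delta(q',\sigma)$ for any $q'\in t_1$, and $\mathsf{Ord}(q_1)<\mathsf{Ord}(q_2)$; (b) $q_1=\delta(q_1',\sigma)$ for some $q_1'\in t_1$ but $q_2$ is not $\delta(q',\sigma)$ for any $q'\in t_1$; (c) both have such predecessors in $t_1$ and $\min_{<_1}\{q'\in t_1\mid\delta(q',\sigma)=q_1\}<_1\min_{<_1}\{q'\in t_1\mid\delta(q',\sigma)=q_2\}$. Coloring of this transition: let $\mathsf{Dec}(t_1)=\{q\in t_1\mid \mathsf{Ind}_{(t_2,<_2)}(\delta(q,\sigma))<\mathsf{Ind}_{(t_1,<_1)}(q)\}$ and $\mathsf{Acc}(t_1)=\{q\in t_1\mid\exists q'\in t_2:(q,\sigma,q')\in\alpha\}$. The color is: if $\mathsf{Dec}(t_1)=\emptyset\ne\mathsf{Acc}(t_1)$: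 $2\min_{q\in\mathsf{Acc}(t_1)}\mathsf{Ind}_{(t_1,<_1)}(q)$; if $\mathsf{Dec}(t_1)\ne\emptyset=\mathsf{Acc}(t_1)$: $2\min_{q\in\mathsf{Dec}(t_1)}\mathsf{Ind}_{(t_1,<_1)}(q)-1$; if both nonempty: the minimum of these two values; if both empty: $2|Q_d|+1$. *)

theory Defs
  imports Main "HOL-Library.Extended_Nat"
begin

definition is_NBA :: "'q set \<Rightarrow> 'q \<Rightarrow> 's set \<Rightarrow> ('q \<times> 's \<times> 'q) set \<Rightarrow> ('q \<times> 's \<times> 'q) set \<Rightarrow> bool" where
  "is_NBA Q q0 \<Sigma> \<delta> \<alpha> \<longleftrightarrow>
     finite Q \<and> finite \<Sigma> \<and> q0 \<in> Q \<and> \<delta> \<subseteq> Q \<times> \<Sigma> \<times> Q \<and>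
     (\<forall>q\<in>Q. \<forall>\<sigma>\<in>\<Sigma>. \<exists>q'. (q, \<sigma>, q') \<in> \<delta>) \<and> \<alpha> \<subseteq> \<delta>"

definition is_LDBA :: "'q set \<Rightarrow> 'q \<Rightarrow> 's set \<Rightarrow> ('q \<times> 's \<times> 'q) set \<Rightarrow> ('q \<times> 's \<times> 'q) set \<Rightarrow> 'q set \<Rightarrow> bool" where
  "is_LDBA Q q0 \<Sigma> \<delta> \<alpha> Qd \<longleftrightarrow>
     is_NBA Q q0 \<Sigma> \<delta> \<alpha> \<and> Qd \<subseteq> Q \<and>
     \<alpha> \<subseteq> Qd \<times> \<Sigma> \<times> Qd \<and>
     (\<forall>q\<in>Qd. \<forall>\<sigma>\<in>\<Sigma>. \<exists>!q'. (q, \<sigma>, q') \<in> \<delta>) \<and>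
     (\<forall>q\<in>Qd. \<forall>\<sigma> q'. (q, \<sigma>, q') \<in> \<delta> \<longrightarrow> q' \<in> Qd)"

definition is_run :: "'q \<Rightarrow> ('q \<times> 's \<times> 'q) set \<Rightarrow> (nat \<Rightarrow> 's) \<Rightarrow> (nat \<Rightarrow> 'q) \<Rightarrow> bool" where
  "is_run q0 \<delta> w r \<longleftrightarrow> r 0 = q0 \<and> (\<forall>i. (r i, w i, r (Suc i)) \<in> \<delta>)"

definition nba_lang :: "'q \<Rightarrow> 's set \<Rightarrow> ('q \<times> 's \<times> 'q) set \<Rightarrow> ('q \<times> 's \<times> 'q) set \<Rightarrow> (nat \<Rightarrow> 's) set" where
  "nba_lang q0 \<Sigma> \<delta> \<alpha> = {w. (\<forall>i. w i \<in> \<Sigma>) \<and>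
      (\<exists>r. is_run q0 \<delta> w r \<and> (\<exists>\<^sub>\<infinity> i. (r i, w i, r (Suc i)) \<in> \<alpha>))}"

definition is_ordering :: "'q set \<Rightarrow> 'q set \<Rightarrow> ('q \<Rightarrow> enat) \<Rightarrow> bool" where
  "is_ordering Q Qd Ord \<longleftrightarrow>
     (\<forall>q\<in>Q. Ord q = \<infinity> \<longleftrightarrow> q \<notin> Qd) \<and>
     (\<forall>q\<in>Qd. \<exists>n::nat. Ord q = enat n \<and> 1 \<le> n \<and> n \<le> card Qd) \<and>
     inj_on Ord Qd"

fun dpa_run :: "('b \<Rightarrow> 's \<Rightarrow> 'b) \<Rightarrow> 'b \<Rightarrow> (nat \<Rightarrow> 's) \<Rightarrow> nat \<Rightarrow> 'b" where
  "dpa_run dlt q0 w 0 = q0"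
| "dpa_run dlt q0 w (Suc i) = dlt (dpa_run dlt q0 w i) (w i)"

definition dpa_lang :: "'s set \<Rightarrow> ('b \<Rightarrow> 's \<Rightarrow> 'b) \<Rightarrow> 'b \<Rightarrow> ('b \<Rightarrow> 's \<Rightarrow> int) \<Rightarrow> (nat \<Rightarrow> 's) set" where
  "dpa_lang \<Sigma> dlt q0 col = {w. (\<forall>i. w i \<in> \<Sigma>) \<and>
     (\<exists>c. even c \<and> (\<exists>\<^sub>\<infinity> i. col (dpa_run dlt q0 w i) (w i) = c) \<and>
          (\<forall>c'. (\<exists>\<^sub>\<infinity> i. col (dpa_run dlt q0 w i) (w i) = c') \<longrightarrow> c \<le> c'))}"

definition post :: "('q \<times> 's \<times> 'q) set \<Rightarrow> 's \<Rightarrow> 'q set \<Rightarrow> 'q set" where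
  "post \<delta> \<sigma> S = {q'. \<exists>q\<in>S. (q, \<sigma>, q') \<in> \<delta>}"

definition dsucc :: "('q \<times> 's \<times> 'q) set \<Rightarrow> 'q \<Rightarrow> 's \<Rightarrow> 'q" where
  "dsucc \<delta> q \<sigma> = (THE q'. (q, \<sigma>, q') \<in> \<delta>)"

definition is_OP :: "'q set \<Rightarrow> ('q set \<times> ('q \<times> 'q) set) \<Rightarrow> bool" where
  "is_OP S tR \<longleftrightarrow> (let t = fst tR; R = snd tR in
     t \<subseteq> S \<and> R \<subseteq> t \<times> t \<and> irrefl R \<and> trans R \<and> total_on t R)"

definition Ind :: "'q set \<Rightarrow> ('q \<times> 'q) set \<Rightarrow> 'q \<Rightarrow> nat" where
  "Ind t R e = card {x \<in> t. (x, e) \<in> R} + 1"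

definition minR :: "('q \<times> 'q) set \<Rightarrow> 'q set \<Rightarrow> 'q" where
  "minR R X = (THE m. m \<in> X \<and> (\<forall>y\<in>X. y \<noteq> m \<longrightarrow> (m, y) \<in> R))"

definition hasPred :: "('q \<times> 's \<times> 'q) set \<Rightarrow> 'q set \<Rightarrow> 's \<Rightarrow> 'q \<Rightarrow> bool" where
  "hasPred \<delta> t1 \<sigma> q \<longleftrightarrow> (\<exists>q'\<in>t1. dsucc \<delta> q' \<sigma> = q)"

definition minPred :: "('q \<times> 's \<times> 'q) set \<Rightarrow> 'q set \<Rightarrow> ('q \<times> 'q) set \<Rightarrow> 's \<Rightarrow> 'q \<Rightarrow> 'q" where
  "minPred \<delta> t1 R1 \<sigma> q = minR R1 {q' \<in> t1. dsucc \<delta> q' \<sigma> = q}"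

type_synonym 'q Bstate = "'q set \<times> ('q set \<times> ('q \<times> 'q) set)"

definition B_states :: "'q set \<Rightarrow> 'q set \<Rightarrow> 'q Bstate set" where
  "B_states Q Qd = {(s, tR). s \<subseteq> Q - Qd \<and> is_OP Qd tR}"

definition B_init :: "'q \<Rightarrow> 'q Bstate" where
  "B_init q0 = ({q0}, ({}, {}))"

definition B_delta :: "'q set \<Rightarrow> ('q \<times> 's \<times> 'q) set \<Rightarrow> 'q set \<Rightarrow> ('q \<Rightarrow> enat)
                       \<Rightarrow> 'q Bstate \<Rightarrow> 's \<Rightarrow> 'q Bstate" where
  "B_delta Q \<delta> Qd Ord st \<sigma> = (case st of (s1, (t1, R1)) \<Rightarrow>
     (let s2 = post \<delta> \<sigma> s1 \<inter> (Q - Qd);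
          t2 = post \<delta> \<sigma> (s1 \<union> t1) \<inter> Qd;
          hp = hasPred \<delta> t1 \<sigma>;
          mp = minPred \<delta> t1 R1 \<sigma>;
          R2 = {(q1, q2). q1 \<in> t2 \<and> q2 \<in> t2 \<and>
                 ((\<not> hp q1 \<and> \<not> hp q2 \<and> Ord q1 < Ord q2) \<or>
                  (hp q1 \<and> \<not> hp q2) \<or>
                  (hp q1 \<and> hp q2 \<and> (mp q1, mp q2) \<in> R1))}
      in (s2, (t2, R2))))"

definition B_color :: "'q set \<Rightarrow> ('q \<times> 's \<times> 'q) set \<Rightarrow> ('q \<times> 's \<times> 'q) set \<Rightarrow> 'q set \<Rightarrow> ('q \<Rightarrow> enat)
                       \<Rightarrow> 'q Bstate \<Rightarrow> 's \<Rightarrow> int" where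
  "B_color Q \<delta> \<alpha> Qd Ord st \<sigma> = (case st of (s1, (t1, R1)) \<Rightarrow>
     (case B_delta Q \<delta> Qd Ord st \<sigma> of (s2, (t2, R2)) \<Rightarrow>
       (let Dec = {q \<in> t1. Ind t2 R2 (dsucc \<delta> q \<sigma>) < Ind t1 R1 q};
            Acc = {q \<in> t1. \<exists>q'\<in>t2. (q, \<sigma>, q') \<in> \<alpha>};
            a = 2 * int (Min (Ind t1 R1 ` Acc));
            d = 2 * int (Min (Ind t1 R1 ` Dec)) - 1
        in if Dec = {} \<and> Acc \<noteq> {} then a
           else if Dec \<noteq> {} \<and> Acc = {} then d
           else if Dec \<noteq> {} \<and> Acc \<noteq> {} then min a d
           else 2 * int (card Qd) + 1)))"

end

theory Submission
  imports Defs "HOL-Library.Infinite_Set"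
begin

text \<open>The component (t, <) of a state of B lists the deterministic states reached so far
  in order of age: states newly entering Qd are appended in the order given by Ord, and when
  several of them move to the same successor, that successor inherits the position of the
  oldest. Hence the index of a deterministic run never increases, and it decreases exactly
  when the run itself or an older one merges into a still older run.

  If A has an accepting run, it eventually stays in Qd and its index stabilises at some K.
  From then on only states of index greater than K decrease, so every odd colour is at least
  2K+1, whereas every accepting transition of the run produces a colour at most 2K; the least
  recurring colour is therefore even. Conversely, if the least recurring colour is 2k, then
  from some point on the state of index k keeps its index, so it is followed by a single
  deterministic run, and each later occurrence of colour 2k is an accepting transition of
  that run.\<close>

section \<open>Strict total orders and indices\<close>

definition strict_total_order_on :: "'a set \<Rightarrow> ('a \<times> 'a) set \<Rightarrow> bool" where
  "strict_total_order_on t R \<longleftrightarrow> R \<subseteq> t \<times> t \<and> strict_linear_order_on t R"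

lemma is_OP_iff: "is_OP S tR \<longleftrightarrow> fst tR \<subseteq> S \<and> strict_total_order_on (fst tR) (snd tR)"
  unfolding is_OP_def strict_total_order_on_def strict_linear_order_on_def Let_def by auto

context
  fixes t :: "'a set" and R :: "('a \<times> 'a) set"
  assumes order: "strict_total_order_on t R"
begin

lemma strict_total_order_on_field: "(x, y) \<in> R \<Longrightarrow> x \<in> t \<and> y \<in> t"
  using order unfolding strict_total_order_on_def by blast

lemma strict_total_order_on_irrefl: "(x, x) \<notin> R"
  using order unfolding strict_total_order_on_def strict_linear_order_on_def irrefl_def by blast

lemma strict_total_order_on_trans: "(x, y) \<in> R \<Longrightarrow> (y, z) \<in> R \<Longrightarrow> (x, z) \<in> R"
  using order unfolding strict_total_order_on_def strict_linear_order_on_def trans_def by blast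

lemma strict_total_order_on_total: "x \<in> t \<Longrightarrow> y \<in> t \<Longrightarrow> x \<noteq> y \<Longrightarrow> (x, y) \<in> R \<or> (y, x) \<in> R"
  using order unfolding strict_total_order_on_def strict_linear_order_on_def total_on_def by blast

lemma minR_least:
  assumes "finite X" "X \<noteq> {}" "X \<subseteq> t"
  shows "minR R X \<in> X \<and> (\<forall>y\<in>X. y \<noteq> minR R X \<longrightarrow> (minR R X, y) \<in> R)"
proof -
  have "wf (R \<inter> X \<times> X)"
  proof (rule finite_acyclic_wf)
    show "finite (R \<inter> X \<times> X)" using assms(1) by blast
    have "trans (R \<inter> X \<times> X)" by (auto intro: transI strict_total_order_on_trans)
    then show "acyclic (R \<inter> X \<times> X)" by (simp add: acyclic_irrefl irrefl_def strict_total_order_on_irrefl)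
  qed
  then obtain m where m: "m \<in> X" "\<And>y. (y, m) \<in> R \<inter> X \<times> X \<Longrightarrow> y \<notin> X"
    using wfE_min' assms(2) by blast
  have least: "\<forall>y\<in>X. y \<noteq> m \<longrightarrow> (m, y) \<in> R"
  proof (intro ballI impI)
    fix y assume "y \<in> X" "y \<noteq> m"
    then show "(m, y) \<in> R" using m assms(3) strict_total_order_on_total[of m y] by blast
  qed
  have "\<exists>!m. m \<in> X \<and> (\<forall>y\<in>X. y \<noteq> m \<longrightarrow> (m, y) \<in> R)"
  proof (rule ex1I)
    show "m \<in> X \<and> (\<forall>y\<in>X. y \<noteq> m \<longrightarrow> (m, y) \<in> R)" using m(1) least by blast
  next
    fix m' assume "m' \<in> X \<and> (\<forall>y\<in>X. y \<noteq> m' \<longrightarrow> (m', y) \<in> R)"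
    then show "m' = m" using m(1) least strict_total_order_on_irrefl strict_total_order_on_trans by metis
  qed
  then show ?thesis unfolding minR_def by (rule theI')
qed

lemma Ind_strict_mono:
  assumes "finite t" "(x, y) \<in> R"
  shows "Ind t R x < Ind t R y"
proof -
  have "{z \<in> t. (z, x) \<in> R} \<subset> {z \<in> t. (z, y) \<in> R}"
    using assms(2) strict_total_order_on_field strict_total_order_on_trans strict_total_order_on_irrefl by blast
  then show ?thesis unfolding Ind_def using assms(1) by (simp add: psubset_card_mono)
qed

lemma Ind_inj:
  assumes "finite t" "x \<in> t" "y \<in> t" "Ind t R x = Ind t R y"
  shows "x = y"
  using assms strict_total_order_on_total[of x y] Ind_strict_mono[of x y] Ind_strict_mono[of y x] by auto

lemma Ind_le_card:
  assumes "finite t" "x \<in> t"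
  shows "Ind t R x \<le> card t"
proof -
  have "card {z \<in> t. (z, x) \<in> R} \<le> card (t - {x})"
    using assms(1) strict_total_order_on_irrefl by (intro card_mono) auto
  also have "\<dots> < card t" using assms by (rule card_Diff1_less)
  finally show ?thesis unfolding Ind_def by simp
qed

end

section \<open>Eventual behaviour of sequences\<close>

lemma nat_seq_eventually_constant:
  fixes k :: "nat \<Rightarrow> nat"
  assumes "\<And>i. m \<le> i \<Longrightarrow> k (Suc i) \<le> k i"
  shows "\<exists>M\<ge>m. \<forall>i\<ge>M. k i = k M"
proof -
  obtain M where M: "m \<le> M" "\<And>i. m \<le> i \<Longrightarrow> k M \<le> k i"
    using ex_has_least_nat[of "\<lambda>i. m \<le> i" m k] by auto
  have "k i \<le> k M" if "M \<le> i" for i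
    using that
  proof (induction rule: dec_induct)
    case (step n)
    then show ?case using assms[of n] M(1) by simp
  qed simp
  moreover have "k M \<le> k i" if "M \<le> i" for i
    using M that by simp
  ultimately show ?thesis using M(1) by (blast intro: order.antisym)
qed

definition least_recurring :: "(nat \<Rightarrow> int) \<Rightarrow> int \<Rightarrow> bool" where
  "least_recurring f c \<longleftrightarrow> (\<exists>\<^sub>\<infinity> i. f i = c) \<and> (\<forall>c'. (\<exists>\<^sub>\<infinity> i. f i = c') \<longrightarrow> c \<le> c')"

lemma dpa_lang_iff:
  "w \<in> dpa_lang \<Sigma> dlt q0 col \<longleftrightarrow>
     (\<forall>i. w i \<in> \<Sigma>) \<and> (\<exists>c. even c \<and> least_recurring (\<lambda>i. col (dpa_run dlt q0 w i) (w i)) c)"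
  unfolding dpa_lang_def least_recurring_def by auto

context
  fixes f :: "nat \<Rightarrow> int" and b :: int
  assumes bounded_below: "\<And>i. b \<le> f i"
begin

lemma least_recurring_exists:
  assumes "\<exists>\<^sub>\<infinity> i. f i \<le> u"
  shows "\<exists>c\<le>u. least_recurring f c"
proof -
  define C where "C = {x \<in> {b..u}. \<exists>\<^sub>\<infinity> i. f i = x}"
  have "finite C" unfolding C_def by (rule finite_subset[OF _ finite_atLeastAtMost_int]) blast
  have "\<exists>\<^sub>\<infinity> i. \<exists>x\<in>{b..u}. f i = x"
    using assms by (rule INFM_mono) (use bounded_below in auto)
  then have "C \<noteq> {}"
    unfolding C_def INFM_finite_Bex_distrib[OF finite_atLeastAtMost_int] by blast
  then have min: "Min C \<in> {b..u}" "\<exists>\<^sub>\<infinity> i. f i = Min C"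
    using Min_in[OF \<open>finite C\<close>] unfolding C_def by auto
  have "Min C \<le> c'" if c': "\<exists>\<^sub>\<infinity> i. f i = c'" for c'
  proof (cases "c' \<le> u")
    case True
    have "b \<le> c'" using INFM_EX[OF c'] bounded_below by blast
    then have "c' \<in> C" unfolding C_def using True c' by simp
    then show ?thesis using \<open>finite C\<close> by simp
  next
    case False
    then show ?thesis using min(1) by simp
  qed
  then show ?thesis using min unfolding least_recurring_def by auto
qed

lemma least_recurring_eventually_le:
  assumes "least_recurring f c"
  shows "\<exists>N. \<forall>i\<ge>N. c \<le> f i"
proof -
  have rare: "\<not> (\<exists>\<^sub>\<infinity> i. f i = x)" if "x < c" for x
    using assms that unfolding least_recurring_def by (meson not_le)
  have "\<not> (\<exists>\<^sub>\<infinity> i. \<exists>x\<in>{b..<c}. f i = x)"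
    unfolding INFM_finite_Bex_distrib[OF finite_atLeastLessThan_int] using rare by auto
  then obtain N where N: "\<forall>i\<ge>N. \<not> (\<exists>x\<in>{b..<c}. f i = x)"
    unfolding INFM_nat_le by blast
  have "c \<le> f i" if "N \<le> i" for i
    using N that bounded_below[of i] by (meson atLeastLessThan_iff not_le)
  then show ?thesis by blast
qed

end

section \<open>One step of the construction\<close>

definition parity_colour :: "'x set \<Rightarrow> 'x set \<Rightarrow> ('x \<Rightarrow> nat) \<Rightarrow> nat \<Rightarrow> int" where
  "parity_colour D A I n =
     (if D = {} \<and> A \<noteq> {} then 2 * int (Min (I ` A))
      else if D \<noteq> {} \<and> A = {} then 2 * int (Min (I ` D)) - 1
      else if D \<noteq> {} \<and> A \<noteq> {} then min (2 * int (Min (I ` A))) (2 * int (Min (I ` D)) - 1)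
      else 2 * int n + 1)"

lemma parity_colour_ge: "- 1 \<le> parity_colour D A I n"
  unfolding parity_colour_def by auto

lemma parity_colour_le_Dec:
  assumes "finite D" "x \<in> D"
  shows "parity_colour D A I n \<le> 2 * int (I x) - 1"
proof -
  have "int (Min (I ` D)) \<le> int (I x)" using assms by simp
  moreover have "D \<noteq> {}" using assms(2) by blast
  ultimately show ?thesis unfolding parity_colour_def by (simp add: min_def)
qed

lemma parity_colour_le_Acc:
  assumes "finite A" "x \<in> A"
  shows "parity_colour D A I n \<le> 2 * int (I x)"
proof -
  have "int (Min (I ` A)) \<le> int (I x)" using assms by simp
  moreover have "A \<noteq> {}" using assms(2) by blast
  ultimately show ?thesis unfolding parity_colour_def by (simp add: min_def)
qed

lemma parity_colour_even:
  assumes "even (parity_colour D A I n)"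
  shows "A \<noteq> {} \<and> parity_colour D A I n = 2 * int (Min (I ` A))"
proof (cases "D = {}")
  case True
  then show ?thesis using assms unfolding parity_colour_def by (cases "A = {}") auto
next
  case False
  then show ?thesis using assms unfolding parity_colour_def by (cases "A = {}") (auto simp: min_def)
qed

lemma parity_colour_odd_ge:
  assumes "finite D" "odd (parity_colour D A I n)" "\<And>x. x \<in> D \<Longrightarrow> k < I x" "k \<le> n"
  shows "2 * int k + 1 \<le> parity_colour D A I n"
proof (cases "D = {}")
  case True
  then show ?thesis using assms(2,4) unfolding parity_colour_def by (cases "A = {}") auto
next
  case False
  then have "Min (I ` D) \<in> I ` D" using assms(1) by simp
  then have "int k + 1 \<le> int (Min (I ` D))" using assms(3) by force
  then show ?thesis using False assms(2) unfolding parity_colour_def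
    by (cases "A = {}") (auto simp: min_def)
qed

lemma B_color_eq:
  assumes "B_delta Q \<delta> Qd Ord (s1, t1, R1) \<sigma> = (s2, t2, R2)"
  shows "B_color Q \<delta> \<alpha> Qd Ord (s1, t1, R1) \<sigma> =
    parity_colour {q \<in> t1. Ind t2 R2 (dsucc \<delta> q \<sigma>) < Ind t1 R1 q}
      {q \<in> t1. \<exists>q'\<in>t2. (q, \<sigma>, q') \<in> \<alpha>} (Ind t1 R1) (card Qd)"
  unfolding B_color_def parity_colour_def by (simp only: assms prod.case Let_def)

locale ldba =
  fixes Q :: "'q set" and q0 :: 'q and \<Sigma> :: "'s set"
    and \<delta> \<alpha> :: "('q \<times> 's \<times> 'q) set" and Qd :: "'q set" and Ord :: "'q \<Rightarrow> enat"
  assumes is_LDBA: "is_LDBA Q q0 \<Sigma> \<delta> \<alpha> Qd"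
    and initial_nondeterministic: "q0 \<notin> Qd"
    and is_ordering: "is_ordering Q Qd Ord"
begin

lemma q0_in_Q: "q0 \<in> Q"
  and delta_subset: "\<delta> \<subseteq> Q \<times> \<Sigma> \<times> Q"
  and alpha_subset: "\<alpha> \<subseteq> \<delta>" "\<alpha> \<subseteq> Qd \<times> \<Sigma> \<times> Qd"
  and Qd_closed: "q \<in> Qd \<Longrightarrow> (q, \<sigma>, q') \<in> \<delta> \<Longrightarrow> q' \<in> Qd"
  using is_LDBA unfolding is_LDBA_def is_NBA_def by blast+

lemma finite_Qd: "finite Qd"
  using is_LDBA finite_subset unfolding is_LDBA_def is_NBA_def by blast

lemma inj_on_Ord: "inj_on Ord Qd"
  using is_ordering unfolding is_ordering_def by blast

lemma dsucc_in_delta: "q \<in> Qd \<Longrightarrow> \<sigma> \<in> \<Sigma> \<Longrightarrow> (q, \<sigma>, dsucc \<delta> q \<sigma>) \<in> \<delta>"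
  unfolding dsucc_def by (rule theI') (use is_LDBA in \<open>auto simp: is_LDBA_def\<close>)

lemma dsucc_unique: "q \<in> Qd \<Longrightarrow> (q, \<sigma>, q') \<in> \<delta> \<Longrightarrow> q' = dsucc \<delta> q \<sigma>"
  using is_LDBA dsucc_in_delta[of q \<sigma>] delta_subset unfolding is_LDBA_def by blast

lemma dsucc_in_Qd: "q \<in> Qd \<Longrightarrow> \<sigma> \<in> \<Sigma> \<Longrightarrow> dsucc \<delta> q \<sigma> \<in> Qd"
  using dsucc_in_delta Qd_closed by blast

definition succ_order :: "'q set \<Rightarrow> 'q set \<Rightarrow> ('q \<times> 'q) set \<Rightarrow> 's \<Rightarrow> ('q \<times> 'q) set" where
  "succ_order s1 t1 R1 \<sigma> = {(q1, q2).
     q1 \<in> post \<delta> \<sigma> (s1 \<union> t1) \<inter> Qd \<and> q2 \<in> post \<delta> \<sigma> (s1 \<union> t1) \<inter> Qd \<and>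
     ((\<not> hasPred \<delta> t1 \<sigma> q1 \<and> \<not> hasPred \<delta> t1 \<sigma> q2 \<and> Ord q1 < Ord q2) \<or>
      (hasPred \<delta> t1 \<sigma> q1 \<and> \<not> hasPred \<delta> t1 \<sigma> q2) \<or>
      (hasPred \<delta> t1 \<sigma> q1 \<and> hasPred \<delta> t1 \<sigma> q2 \<and>
         (minPred \<delta> t1 R1 \<sigma> q1, minPred \<delta> t1 R1 \<sigma> q2) \<in> R1))}"

lemma B_delta_eq:
  "B_delta Q \<delta> Qd Ord (s1, t1, R1) \<sigma> =
     (post \<delta> \<sigma> s1 \<inter> (Q - Qd), post \<delta> \<sigma> (s1 \<union> t1) \<inter> Qd, succ_order s1 t1 R1 \<sigma>)"
  unfolding B_delta_def succ_order_def Let_def by simp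

end

locale ldba_step = ldba Q q0 \<Sigma> \<delta> \<alpha> Qd Ord
  for Q :: "'q set" and q0 and \<Sigma> :: "'s set" and \<delta> \<alpha> Qd Ord +
  fixes \<sigma> :: 's and s1 t1 :: "'q set" and R1 :: "('q \<times> 'q) set"
  assumes letter: "\<sigma> \<in> \<Sigma>" and t1_subset: "t1 \<subseteq> Qd" and order1: "strict_total_order_on t1 R1"
begin

abbreviation "succ q \<equiv> dsucc \<delta> q \<sigma>"
abbreviation "t2 \<equiv> post \<delta> \<sigma> (s1 \<union> t1) \<inter> Qd"
abbreviation "R2 \<equiv> succ_order s1 t1 R1 \<sigma>"

text \<open>The oldest state with the same successor as q; q merges into an older run
  iff senior q \<noteq> q.\<close>
abbreviation "senior q \<equiv> minPred \<delta> t1 R1 \<sigma> (succ q)"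

lemma finite_t1: "finite t1"
  using t1_subset finite_Qd finite_subset by blast

lemma succ_in_t2: "q \<in> t1 \<Longrightarrow> succ q \<in> t2"
  using dsucc_in_delta[of q \<sigma>] dsucc_in_Qd[of q \<sigma>] t1_subset letter unfolding post_def by blast

lemma hasPred_iff: "hasPred \<delta> t1 \<sigma> x \<longleftrightarrow> x \<in> succ ` t1"
  unfolding hasPred_def by auto

lemma minPred_least:
  assumes "x \<in> succ ` t1"
  shows "minPred \<delta> t1 R1 \<sigma> x \<in> t1" "succ (minPred \<delta> t1 R1 \<sigma> x) = x"
    "y \<in> t1 \<Longrightarrow> succ y = x \<Longrightarrow> y \<noteq> minPred \<delta> t1 R1 \<sigma> x \<Longrightarrow> (minPred \<delta> t1 R1 \<sigma> x, y) \<in> R1"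
proof -
  let ?X = "{q \<in> t1. succ q = x}"
  have "finite ?X" using finite_t1 by simp
  moreover have "?X \<noteq> {}" using assms by blast
  ultimately have "minR R1 ?X \<in> ?X \<and> (\<forall>y\<in>?X. y \<noteq> minR R1 ?X \<longrightarrow> (minR R1 ?X, y) \<in> R1)"
    by (rule minR_least[OF order1]) blast
  then show "minPred \<delta> t1 R1 \<sigma> x \<in> t1" "succ (minPred \<delta> t1 R1 \<sigma> x) = x"
    "y \<in> t1 \<Longrightarrow> succ y = x \<Longrightarrow> y \<noteq> minPred \<delta> t1 R1 \<sigma> x \<Longrightarrow> (minPred \<delta> t1 R1 \<sigma> x, y) \<in> R1"
    unfolding minPred_def by blast+
qed

lemma senior:
  assumes "q \<in> t1"
  shows "senior q \<in> t1" "succ (senior q) = succ q" "senior q = q \<or> (senior q, q) \<in> R1"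
proof -
  have succ_q: "succ q \<in> succ ` t1" using assms by blast
  show "senior q \<in> t1" "succ (senior q) = succ q"
    by (rule minPred_least[OF succ_q])+
  show "senior q = q \<or> (senior q, q) \<in> R1"
    using minPred_least(3)[OF succ_q assms] by (cases "senior q = q") simp_all
qed

lemma succ_order_trans:
  assumes "(x, y) \<in> R2" "(y, z) \<in> R2"
  shows "(x, z) \<in> R2"
proof -
  let ?m = "minPred \<delta> t1 R1 \<sigma>"
  have "(?m x, ?m y) \<in> R1 \<Longrightarrow> (?m y, ?m z) \<in> R1 \<Longrightarrow> (?m x, ?m z) \<in> R1"
    by (rule strict_total_order_on_trans[OF order1])
  moreover have "Ord x < Ord y \<Longrightarrow> Ord y < Ord z \<Longrightarrow> Ord x < Ord z"
    by (rule less_trans)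
  ultimately show ?thesis using assms unfolding succ_order_def by auto
qed

lemma succ_order_total:
  assumes "x \<in> t2" "y \<in> t2" "x \<noteq> y"
  shows "(x, y) \<in> R2 \<or> (y, x) \<in> R2"
proof (cases "hasPred \<delta> t1 \<sigma> x \<and> hasPred \<delta> t1 \<sigma> y")
  case True
  then have "minPred \<delta> t1 R1 \<sigma> x \<noteq> minPred \<delta> t1 R1 \<sigma> y"
    using assms(3) minPred_least(2) hasPred_iff by metis
  then have "(minPred \<delta> t1 R1 \<sigma> x, minPred \<delta> t1 R1 \<sigma> y) \<in> R1 \<or>
      (minPred \<delta> t1 R1 \<sigma> y, minPred \<delta> t1 R1 \<sigma> x) \<in> R1"
    using True strict_total_order_on_total[OF order1] minPred_least(1) hasPred_iff by metis
  then show ?thesis using assms True unfolding succ_order_def by auto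
next
  case False
  have "Ord x \<noteq> Ord y" using inj_on_Ord assms unfolding inj_on_def by blast
  then show ?thesis using assms False unfolding succ_order_def by (auto simp: neq_iff)
qed

lemma strict_total_order_succ_order: "strict_total_order_on t2 R2"
  unfolding strict_total_order_on_def strict_linear_order_on_def
proof (intro conjI)
  show "R2 \<subseteq> t2 \<times> t2" unfolding succ_order_def by auto
  show "irrefl R2" unfolding succ_order_def irrefl_def using strict_total_order_on_irrefl[OF order1] by auto
  show "trans R2" by (auto intro: transI succ_order_trans)
  show "total_on t2 R2" unfolding total_on_def using succ_order_total by blast
qed

lemma Ind_succ:
  assumes q: "q \<in> t1"
  shows "Ind t2 R2 (succ q) = card {y \<in> t1. senior y = y \<and> (y, senior q) \<in> R1} + 1"
proof -
  let ?F = "{y \<in> t1. senior y = y \<and> (y, senior q) \<in> R1}"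
  have has_pred_q: "hasPred \<delta> t1 \<sigma> (succ q)" using q hasPred_iff by blast
  have "{x \<in> t2. (x, succ q) \<in> R2} = succ ` ?F"
  proof
    show "{x \<in> t2. (x, succ q) \<in> R2} \<subseteq> succ ` ?F"
    proof
      fix x assume "x \<in> {x \<in> t2. (x, succ q) \<in> R2}"
      then have x: "x \<in> succ ` t1" "(minPred \<delta> t1 R1 \<sigma> x, senior q) \<in> R1"
        using has_pred_q hasPred_iff unfolding succ_order_def by auto
      then have "minPred \<delta> t1 R1 \<sigma> x \<in> ?F" using minPred_least[OF x(1)] by simp
      then show "x \<in> succ ` ?F" using minPred_least(2)[OF x(1)] by force
    qed
    show "succ ` ?F \<subseteq> {x \<in> t2. (x, succ q) \<in> R2}"
      using has_pred_q succ_in_t2 q hasPred_iff unfolding succ_order_def by auto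
  qed
  moreover have "inj_on succ ?F" by (rule inj_onI) (metis (mono_tags, lifting) mem_Collect_eq)
  ultimately show ?thesis unfolding Ind_def by (simp add: card_image)
qed

lemma seniors_below_subset:
  assumes q: "q \<in> t1"
  shows "{y \<in> t1. senior y = y \<and> (y, senior q) \<in> R1} \<subseteq> {y \<in> t1. (y, q) \<in> R1}"
  using senior(3)[OF q] strict_total_order_on_trans[OF order1] by auto

lemma Ind_succ_le: "q \<in> t1 \<Longrightarrow> Ind t2 R2 (succ q) \<le> Ind t1 R1 q"
  using Ind_succ seniors_below_subset finite_t1
  unfolding Ind_def by (simp add: card_mono)

lemma Ind_succ_kept:
  assumes q: "q \<in> t1" and kept: "\<not> Ind t2 R2 (succ q) < Ind t1 R1 q"
  shows "senior q = q" "\<And>y. (y, q) \<in> R1 \<Longrightarrow> senior y = y"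
proof -
  let ?F = "{y \<in> t1. senior y = y \<and> (y, senior q) \<in> R1}"
  let ?L = "{y \<in> t1. (y, q) \<in> R1}"
  have "card ?L \<le> card ?F" using kept Ind_succ[OF q] unfolding Ind_def by simp
  moreover have "card ?F \<le> card ?L"
    using seniors_below_subset[OF q] finite_t1 by (intro card_mono) auto
  ultimately have F_eq: "?F = ?L"
    using seniors_below_subset[OF q] finite_t1 by (intro card_subset_eq) auto
  show "senior q = q"
  proof (rule ccontr)
    assume "senior q \<noteq> q"
    then have "senior q \<in> ?L" using senior[OF q] by auto
    moreover have "senior q \<notin> ?F" using strict_total_order_on_irrefl[OF order1] by auto
    ultimately show False using F_eq by blast
  qed
  then show "senior y = y" if "(y, q) \<in> R1" for y
    using F_eq that strict_total_order_on_field[OF order1] by blast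
qed

lemma Ind_succ_kept_below:
  assumes "q \<in> t1" "(q', q) \<in> R1" "\<not> Ind t2 R2 (succ q) < Ind t1 R1 q"
  shows "\<not> Ind t2 R2 (succ q') < Ind t1 R1 q'"
proof -
  have q': "q' \<in> t1" using strict_total_order_on_field[OF order1 assms(2)] by blast
  have "{y \<in> t1. senior y = y \<and> (y, senior q') \<in> R1} = {y \<in> t1. (y, q') \<in> R1}"
    using Ind_succ_kept[OF assms(1,3)] assms(2) strict_total_order_on_trans[OF order1] by auto
  then show ?thesis using Ind_succ[OF q'] unfolding Ind_def by simp
qed

end

section \<open>The run of B on a word\<close>

primrec det_path :: "('q \<times> 's \<times> 'q) set \<Rightarrow> (nat \<Rightarrow> 's) \<Rightarrow> nat \<Rightarrow> 'q \<Rightarrow> nat \<Rightarrow> 'q" where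
  "det_path \<delta> w N q 0 = q"
| "det_path \<delta> w N q (Suc j) = dsucc \<delta> (det_path \<delta> w N q j) (w (N + j))"

locale ldba_word = ldba Q q0 \<Sigma> \<delta> \<alpha> Qd Ord
  for Q :: "'q set" and q0 and \<Sigma> :: "'s set" and \<delta> \<alpha> Qd Ord +
  fixes w :: "nat \<Rightarrow> 's"
  assumes word: "\<And>i. w i \<in> \<Sigma>"
begin

abbreviation "state i \<equiv> dpa_run (B_delta Q \<delta> Qd Ord) (B_init q0) w i"
abbreviation "S i \<equiv> fst (state i)"
abbreviation "T i \<equiv> fst (snd (state i))"
abbreviation "Lt i \<equiv> snd (snd (state i))"
abbreviation "colour i \<equiv> B_color Q \<delta> \<alpha> Qd Ord (state i) (w i)"
abbreviation "Dec i \<equiv> {q \<in> T i. Ind (T (Suc i)) (Lt (Suc i)) (dsucc \<delta> q (w i)) < Ind (T i) (Lt i) q}"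
abbreviation "Acc i \<equiv> {q \<in> T i. \<exists>q'\<in>T (Suc i). (q, w i, q') \<in> \<alpha>}"

lemma state_0: "S 0 = {q0}" "T 0 = {}" "Lt 0 = {}"
  by (simp_all add: B_init_def)

lemma state_Suc:
  "S (Suc i) = post \<delta> (w i) (S i) \<inter> (Q - Qd)"
  "T (Suc i) = post \<delta> (w i) (S i \<union> T i) \<inter> Qd"
  "Lt (Suc i) = succ_order (S i) (T i) (Lt i) (w i)"
  by (cases "state i"; simp add: B_delta_eq)+

lemma state_in_B_states: "state i \<in> B_states Q Qd"
proof (induction i)
  case 0
  show ?case
    using initial_nondeterministic q0_in_Q
    by (simp add: B_init_def B_states_def is_OP_iff strict_total_order_on_def
        strict_linear_order_on_def)
next
  case (Suc i)
  then have "w i \<in> \<Sigma>" "T i \<subseteq> Qd" "strict_total_order_on (T i) (Lt i)"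
    using word by (auto simp: B_states_def is_OP_iff split: prod.splits)
  then have "ldba_step Q q0 \<Sigma> \<delta> \<alpha> Qd Ord (w i) (T i) (Lt i)"
    by (intro ldba_step.intro ldba_step_axioms.intro ldba_axioms)
  then have "strict_total_order_on (T (Suc i)) (Lt (Suc i))"
    unfolding state_Suc by (rule ldba_step.strict_total_order_succ_order)
  moreover have "S (Suc i) \<subseteq> Q - Qd" "T (Suc i) \<subseteq> Qd" unfolding state_Suc by blast+
  ultimately show ?case by (simp add: B_states_def is_OP_iff mem_Times_iff)
qed

lemma S_subset: "S i \<subseteq> Q - Qd"
  and T_subset: "T i \<subseteq> Qd"
  and strict_total_order_T: "strict_total_order_on (T i) (Lt i)"
  using state_in_B_states[of i] by (auto simp: B_states_def is_OP_iff split: prod.splits)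

lemma finite_T: "finite (T i)"
  using T_subset finite_Qd finite_subset by blast

lemma finite_Dec: "finite (Dec i)"
  and finite_Acc: "finite (Acc i)"
  using finite_T[of i] by (auto intro: rev_finite_subset)

lemma colour_eq: "colour i = parity_colour (Dec i) (Acc i) (Ind (T i) (Lt i)) (card Qd)"
proof -
  obtain s t R where "state i = (s, t, R)" by (metis prod.exhaust)
  moreover obtain s' t' R' where "B_delta Q \<delta> Qd Ord (s, t, R) (w i) = (s', t', R')"
    by (metis prod.exhaust)
  ultimately show ?thesis by (simp add: B_color_eq)
qed

lemma colour_ge: "- 1 \<le> colour i"
  unfolding colour_eq by (rule parity_colour_ge)

lemma ldba_step_at: "ldba_step Q q0 \<Sigma> \<delta> \<alpha> Qd Ord (w i) (T i) (Lt i)"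
  using word T_subset strict_total_order_T
  by (intro ldba_step.intro ldba_step_axioms.intro ldba_axioms)

lemma dsucc_in_T: "q \<in> T i \<Longrightarrow> dsucc \<delta> q (w i) \<in> T (Suc i)"
  unfolding state_Suc by (rule ldba_step.succ_in_t2[OF ldba_step_at])

lemma Ind_dsucc_le: "q \<in> T i \<Longrightarrow> Ind (T (Suc i)) (Lt (Suc i)) (dsucc \<delta> q (w i)) \<le> Ind (T i) (Lt i) q"
  unfolding state_Suc by (rule ldba_step.Ind_succ_le[OF ldba_step_at])

lemma not_Dec_downward: "q \<in> T i \<Longrightarrow> (q', q) \<in> Lt i \<Longrightarrow> q \<notin> Dec i \<Longrightarrow> q' \<notin> Dec i"
  using ldba_step.Ind_succ_kept_below[OF ldba_step_at] unfolding state_Suc by blast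

lemma Dec_above:
  assumes "q' \<in> T i" "q' \<notin> Dec i" "q \<in> Dec i"
  shows "Ind (T i) (Lt i) q' < Ind (T i) (Lt i) q"
proof -
  have "(q, q') \<notin> Lt i" using not_Dec_downward assms by blast
  moreover have "q \<noteq> q'" using assms by blast
  ultimately have "(q', q) \<in> Lt i" using strict_total_order_on_total[OF strict_total_order_T] assms by blast
  then show ?thesis by (rule Ind_strict_mono[OF strict_total_order_T finite_T])
qed

lemma odd_colour_above_kept:
  assumes q: "q \<in> T i" and kept: "q \<notin> Dec i" and odd: "odd (colour i)"
  shows "2 * int (Ind (T i) (Lt i) q) + 1 \<le> colour i"
proof -
  have "Ind (T i) (Lt i) q \<le> card Qd"
    using Ind_le_card[OF strict_total_order_T finite_T q] card_mono[OF finite_Qd T_subset]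
    by (rule order.trans)
  moreover have "Ind (T i) (Lt i) q < Ind (T i) (Lt i) q'" if "q' \<in> Dec i" for q'
    using Dec_above[OF q kept that] .
  ultimately show ?thesis
    using odd unfolding colour_eq by (intro parity_colour_odd_ge[OF finite_Dec])
qed

lemma colour_le_at_accepting:
  assumes "q \<in> T i" "(q, w i, q') \<in> \<alpha>" "q' \<in> T (Suc i)"
  shows "colour i \<le> 2 * int (Ind (T i) (Lt i) q)"
  unfolding colour_eq by (rule parity_colour_le_Acc[OF finite_Acc]) (use assms in blast)

lemma state_reachable:
  "q \<in> S i \<union> T i \<Longrightarrow> \<exists>r. r 0 = q0 \<and> r i = q \<and> (\<forall>j<i. (r j, w j, r (Suc j)) \<in> \<delta>)"
proof (induction i arbitrary: q)
  case 0
  then show ?case using state_0 by auto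
next
  case (Suc i)
  then have "q \<in> post \<delta> (w i) (S i \<union> T i)" unfolding state_Suc post_def by blast
  then obtain p where p: "p \<in> S i \<union> T i" "(p, w i, q) \<in> \<delta>" unfolding post_def by blast
  obtain r where r: "r 0 = q0" "r i = p" "\<forall>j<i. (r j, w j, r (Suc j)) \<in> \<delta>"
    using Suc.IH[OF p(1)] by blast
  let ?r = "r(Suc i := q)"
  have "\<forall>j<Suc i. (?r j, w j, ?r (Suc j)) \<in> \<delta>" using r p by (auto simp: less_Suc_eq)
  then show ?case using r by (intro exI[of _ ?r]) simp
qed

lemma run_through:
  assumes "q \<in> S N \<union> T N" "p 0 = q" "\<And>j. (p j, w (N + j), p (Suc j)) \<in> \<delta>"
  shows "\<exists>r. is_run q0 \<delta> w r \<and> (\<forall>j. r (N + j) = p j)"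
proof -
  obtain r0 where r0: "r0 0 = q0" "r0 N = q" "\<forall>j<N. (r0 j, w j, r0 (Suc j)) \<in> \<delta>"
    using state_reachable[OF assms(1)] by blast
  define r where "r i = (if i < N then r0 i else p (i - N))" for i
  have "(r i, w i, r (Suc i)) \<in> \<delta>" for i
  proof (cases "i < N")
    case True
    then show ?thesis using r0 assms(2) by (cases "Suc i = N") (auto simp: r_def)
  next
    case False
    then show ?thesis using assms(3)[of "i - N"] by (simp add: r_def Suc_diff_le)
  qed
  moreover have "r 0 = q0" using r0 assms(2) by (cases "N = 0") (simp_all add: r_def)
  ultimately show ?thesis unfolding is_run_def r_def by auto
qed

lemma run_tracked:
  assumes "is_run q0 \<delta> w r"
  shows "r i \<in> S i \<union> T i"
proof (induction i)
  case 0
  then show ?case using assms state_0 by (simp add: is_run_def)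
next
  case (Suc i)
  have step: "(r i, w i, r (Suc i)) \<in> \<delta>" using assms by (simp add: is_run_def)
  show ?case
  proof (cases "r (Suc i) \<in> Qd")
    case True
    then show ?thesis using Suc.IH step unfolding state_Suc post_def by blast
  next
    case False
    then have "r i \<in> S i" using Suc.IH T_subset Qd_closed[OF _ step] by blast
    moreover have "r (Suc i) \<in> Q" using step delta_subset by blast
    ultimately show ?thesis using False step unfolding state_Suc post_def by blast
  qed
qed

lemma det_path_in_delta:
  assumes "q \<in> Qd"
  shows "det_path \<delta> w N q j \<in> Qd \<and> (det_path \<delta> w N q j, w (N + j), det_path \<delta> w N q (Suc j)) \<in> \<delta>"
proof (induction j)
  case 0
  then show ?case using assms dsucc_in_delta word by simp
next
  case (Suc j)
  then show ?case using dsucc_in_delta dsucc_in_Qd word by simp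
qed

lemma accepting_run_eventually_deterministic:
  assumes run: "is_run q0 \<delta> w r" and acc: "\<exists>\<^sub>\<infinity> i. (r i, w i, r (Suc i)) \<in> \<alpha>"
  shows "\<exists>m. \<forall>i\<ge>m. r i \<in> T i \<and> r (Suc i) = dsucc \<delta> (r i) (w i)"
proof -
  have run_step: "(r i, w i, r (Suc i)) \<in> \<delta>" for i using run by (simp add: is_run_def)
  obtain m where "(r m, w m, r (Suc m)) \<in> \<alpha>" using INFM_EX[OF acc] by blast
  then have "r m \<in> Qd" using alpha_subset(2) by blast
  have in_Qd: "r i \<in> Qd" if "m \<le> i" for i
    using that
  proof (induction rule: dec_induct)
    case (step n)
    then show ?case using Qd_closed run_step by blast
  qed (fact \<open>r m \<in> Qd\<close>)
  have "r i \<in> T i" if "m \<le> i" for i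
    using run_tracked[OF run, of i] in_Qd[OF that] S_subset by blast
  moreover have "r (Suc i) = dsucc \<delta> (r i) (w i)" if "m \<le> i" for i
    using dsucc_unique[OF in_Qd[OF that] run_step] .
  ultimately show ?thesis by blast
qed

lemma nba_run_imp_dpa_accepts:
  assumes run: "is_run q0 \<delta> w r" and acc: "\<exists>\<^sub>\<infinity> i. (r i, w i, r (Suc i)) \<in> \<alpha>"
  shows "\<exists>c. even c \<and> least_recurring colour c"
proof -
  obtain m where det: "\<And>i. m \<le> i \<Longrightarrow> r i \<in> T i \<and> r (Suc i) = dsucc \<delta> (r i) (w i)"
    using accepting_run_eventually_deterministic[OF assms] by blast
  define k where "k i = Ind (T i) (Lt i) (r i)" for i
  have "k (Suc i) \<le> k i" if "m \<le> i" for i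
    using Ind_dsucc_le det[OF that] unfolding k_def by simp
  then obtain M where M: "m \<le> M" "\<And>i. M \<le> i \<Longrightarrow> k i = k M"
    using nat_seq_eventually_constant by blast
  define K where "K = k M"
  have rT: "r i \<in> T i" if "M \<le> i" for i using det M(1) that by simp
  have kept: "r i \<notin> Dec i" if "M \<le> i" for i
    using M(2)[OF that] M(2)[of "Suc i"] det[of i] M(1) that unfolding k_def by simp
  have index_K: "Ind (T i) (Lt i) (r i) = K" if "M \<le> i" for i
    using M(2)[OF that] unfolding K_def k_def .
  have odd_colour: "2 * int K + 1 \<le> colour i" if "M \<le> i" "odd (colour i)" for i
    using odd_colour_above_kept[OF rT[OF that(1)] kept[OF that(1)] that(2)]
    unfolding index_K[OF that(1)] .
  have colour_acc: "colour i \<le> 2 * int K" if "M \<le> i" "(r i, w i, r (Suc i)) \<in> \<alpha>" for i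
    using colour_le_at_accepting[OF rT[OF that(1)] that(2) rT[OF le_SucI[OF that(1)]]]
    unfolding index_K[OF that(1)] .
  have "\<exists>\<^sub>\<infinity> i. colour i \<le> 2 * int K"
    using INFM_conjI[OF acc MOST_ge_nat[of M]] by (rule INFM_mono) (use colour_acc in blast)
  then obtain c where c: "c \<le> 2 * int K" "least_recurring colour c"
    using least_recurring_exists[where f = "\<lambda>i. colour i", OF colour_ge] by blast
  have "even c"
  proof (rule ccontr)
    assume "odd c"
    obtain i where "M \<le> i" "colour i = c"
      using c(2) unfolding least_recurring_def INFM_nat_le by blast
    then show False using odd_colour \<open>odd c\<close> c(1) by fastforce
  qed
  then show ?thesis using c(2) by blast
qed

lemma Ind_dsucc_eq:
  assumes q: "q \<in> T i" and colour: "2 * int (Ind (T i) (Lt i) q) \<le> colour i"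
  shows "Ind (T (Suc i)) (Lt (Suc i)) (dsucc \<delta> q (w i)) = Ind (T i) (Lt i) q"
proof -
  have "q \<notin> Dec i"
  proof
    assume "q \<in> Dec i"
    then have "colour i \<le> 2 * int (Ind (T i) (Lt i) q) - 1"
      unfolding colour_eq by (rule parity_colour_le_Dec[OF finite_Dec])
    then show False using colour by linarith
  qed
  then have "\<not> Ind (T (Suc i)) (Lt (Suc i)) (dsucc \<delta> q (w i)) < Ind (T i) (Lt i) q"
    using q by blast
  then show ?thesis using Ind_dsucc_le[OF q] by linarith
qed

lemma Acc_at_even_colour:
  assumes "even (colour i)"
  obtains q where "q \<in> Acc i" "colour i = 2 * int (Ind (T i) (Lt i) q)"
proof -
  have "Acc i \<noteq> {} \<and> colour i = 2 * int (Min (Ind (T i) (Lt i) ` Acc i))"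
    using assms unfolding colour_eq by (rule parity_colour_even)
  moreover have "Min (Ind (T i) (Lt i) ` Acc i) \<in> Ind (T i) (Lt i) ` Acc i"
    using finite_Acc calculation by simp
  then obtain q where "Min (Ind (T i) (Lt i) ` Acc i) = Ind (T i) (Lt i) q" "q \<in> Acc i"
    by (rule imageE)
  ultimately have "q \<in> Acc i" "colour i = 2 * int (Ind (T i) (Lt i) q)" by simp_all
  then show ?thesis by (rule that)
qed

lemma accepting_at_colour:
  assumes q: "q \<in> T i" and colour: "colour i = 2 * int (Ind (T i) (Lt i) q)"
  shows "(q, w i, dsucc \<delta> q (w i)) \<in> \<alpha>"
proof -
  have "even (colour i)" unfolding colour by simp
  then obtain q' where q': "q' \<in> Acc i" "colour i = 2 * int (Ind (T i) (Lt i) q')"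
    by (rule Acc_at_even_colour)
  have q'_T: "q' \<in> T i" and "\<exists>q''\<in>T (Suc i). (q', w i, q'') \<in> \<alpha>"
    using q'(1) by simp_all
  moreover have "q = q'"
    using Ind_inj[OF strict_total_order_T finite_T q q'_T] q'(2) colour by simp
  ultimately obtain q'' where acc: "(q, w i, q'') \<in> \<alpha>" by (elim bexE) simp
  have "q'' = dsucc \<delta> q (w i)"
    by (rule dsucc_unique[OF subsetD[OF T_subset q] subsetD[OF alpha_subset(1) acc]])
  then show ?thesis using acc by simp
qed

lemma det_path_keeps_index:
  assumes q: "q \<in> T N" and colour: "\<And>i. N \<le> i \<Longrightarrow> 2 * int (Ind (T N) (Lt N) q) \<le> colour i"
  shows "det_path \<delta> w N q j \<in> T (N + j) \<and>
    Ind (T (N + j)) (Lt (N + j)) (det_path \<delta> w N q j) = Ind (T N) (Lt N) q"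
proof (induction j)
  case 0
  show ?case using q by simp
next
  case (Suc j)
  let ?q = "det_path \<delta> w N q j"
  have "2 * int (Ind (T (N + j)) (Lt (N + j)) ?q) \<le> colour (N + j)"
    using Suc colour[of "N + j"] by simp
  then show ?case
    using Suc dsucc_in_T[of ?q "N + j"] Ind_dsucc_eq[of ?q "N + j"] by simp
qed

lemma dpa_accepts_imp_nba_run:
  assumes even: "even c" and least: "least_recurring colour c"
  shows "\<exists>r. is_run q0 \<delta> w r \<and> (\<exists>\<^sub>\<infinity> i. (r i, w i, r (Suc i)) \<in> \<alpha>)"
proof -
  obtain N where N: "\<And>i. N \<le> i \<Longrightarrow> c \<le> colour i"
    using least_recurring_eventually_le[where f = "\<lambda>i. colour i", OF colour_ge least] by blast
  obtain N' where N': "N \<le> N'" "colour N' = c"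
    using least unfolding least_recurring_def INFM_nat_le by blast
  have "even (colour N')" using N'(2) even by simp
  then obtain q where "q \<in> Acc N'" and "colour N' = 2 * int (Ind (T N') (Lt N') q)"
    by (rule Acc_at_even_colour)
  then have q: "q \<in> T N'" and q_index: "c = 2 * int (Ind (T N') (Lt N') q)"
    using N'(2) by simp_all
  let ?p = "det_path \<delta> w N' q"
  have p: "?p j \<in> T (N' + j) \<and> Ind (T (N' + j)) (Lt (N' + j)) (?p j) = Ind (T N') (Lt N') q" for j
    using q q_index N N'(1) by (intro det_path_keeps_index) auto
  have path: "\<And>j. (?p j, w (N' + j), ?p (Suc j)) \<in> \<delta>"
    using det_path_in_delta[OF subsetD[OF T_subset q]] by blast
  obtain r where r: "is_run q0 \<delta> w r" "\<And>j. r (N' + j) = ?p j"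
    using run_through[OF UnI2[OF q] det_path.simps(1) path] by blast
  have acc: "(r i, w i, r (Suc i)) \<in> \<alpha>" if at_c: "colour i = c \<and> N' \<le> i" for i
  proof -
    obtain j where i: "i = N' + j" using le_Suc_ex[of N' i] at_c by blast
    have "(?p j, w i, dsucc \<delta> (?p j) (w i)) \<in> \<alpha>"
      using p[of j] at_c q_index unfolding i by (intro accepting_at_colour) simp_all
    then show ?thesis using r(2)[of j] r(2)[of "Suc j"] unfolding i by simp
  qed
  have "\<exists>\<^sub>\<infinity> i. colour i = c \<and> N' \<le> i"
    using INFM_conjI[OF _ MOST_ge_nat[of N']] least unfolding least_recurring_def by blast
  then have "\<exists>\<^sub>\<infinity> i. (r i, w i, r (Suc i)) \<in> \<alpha>"
    by (rule INFM_mono) (rule acc)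
  then show ?thesis using r(1) by blast
qed

end

theorem mainTheorem3:
  fixes Q :: "'q set" and q0 :: 'q and \<Sigma> :: "'s set"
    and \<delta> \<alpha> :: "('q \<times> 's \<times> 'q) set" and Qd :: "'q set" and Ord :: "'q \<Rightarrow> enat"
  assumes "is_LDBA Q q0 \<Sigma> \<delta> \<alpha> Qd"
    and "q0 \<notin> Qd"
    and "is_ordering Q Qd Ord"
  shows "nba_lang q0 \<Sigma> \<delta> \<alpha> =
         dpa_lang \<Sigma> (B_delta Q \<delta> Qd Ord) (B_init q0) (B_color Q \<delta> \<alpha> Qd Ord)"
proof -
  interpret ldba Q q0 \<Sigma> \<delta> \<alpha> Qd Ord using assms by (rule ldba.intro)
  have "w \<in> nba_lang q0 \<Sigma> \<delta> \<alpha> \<longleftrightarrow>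
      w \<in> dpa_lang \<Sigma> (B_delta Q \<delta> Qd Ord) (B_init q0) (B_color Q \<delta> \<alpha> Qd Ord)" for w
  proof (cases "\<forall>i. w i \<in> \<Sigma>")
    case True
    then interpret ldba_word Q q0 \<Sigma> \<delta> \<alpha> Qd Ord w by unfold_locales blast
    show ?thesis unfolding nba_lang_def dpa_lang_iff
      using True nba_run_imp_dpa_accepts dpa_accepts_imp_nba_run by blast
  next
    case False
    then show ?thesis unfolding nba_lang_def dpa_lang_iff by blast
  qed
  then show ?thesis by blast
qed

end
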